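(* Let $V$ be a module over the subalgebra $\mathfrak{b}=\bigoplus_{m\geq 0}(\mathbb{C}L_m\oplus\mathbb{C}G_m)\oplus\mathbb{C}c$ of the Ramond algebra $\mathcal{R}$. Assume that there exists $t\in\mathbb{Z}_+$ such that (1) the action of $L_t$ on $V$ is injective, and (2) $L_iV=0$ for all $i>t$. Then $G_jV=0$ for all $j>t$.
   Context: The Ramond algebra $\mathcal{R}=\mathcal{R}_{\bar 0}\oplus\mathcal{R}_{\bar 1}$ is the Lie superalgebra with basis $\{L_m,G_m,c\mid m\in\mathbb{Z}\}$, where $\mathcal{R}_{\bar 0}=\mathrm{span}\{L_m,c\}$, $\mathcal{R}_{\bar 1}=\mathrm{span}\{G_m\}$, and brackets $[L_m,L_n]=(m-n)L_{m+n}+\delta_{m+n,0}\frac{m^3-m}{12}c$, $[L_m,G_n]=(\frac m2-n)G_{m+n}$, $[G_m,G_n]=2L_{m+n}+\frac13\delta_{m+n,0}(m^2-\frac14)c$, $[\mathcal{R},c]=0$. Modules are $\mathbb{Z}_2$-graded (super)modules. $\mathbb{Z}_+$ denotes the positive integers. *)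

theory Defs
  imports "HOL-Analysis.Analysis"
begin

text \<open>The complex vector space V is the type 'v with scalar multiplication smul;
  the Z2-grading is V = V0 (+) V1 (direct sum of subspaces).
  Super-bracket relations: [x,y] v = x(y v) - (-1)^(|x||y|) y(x v).\<close>

definition ramond_b_module ::
  "(complex \<Rightarrow> 'v::ab_group_add \<Rightarrow> 'v) \<Rightarrow> 'v set \<Rightarrow> 'v set \<Rightarrow>
   (nat \<Rightarrow> 'v \<Rightarrow> 'v) \<Rightarrow> (nat \<Rightarrow> 'v \<Rightarrow> 'v) \<Rightarrow> ('v \<Rightarrow> 'v) \<Rightarrow> bool" where
  "ramond_b_module smul V0 V1 L G c \<longleftrightarrow>
     vector_space smul \<and>
     \<comment> \<open>Z2-grading\<close>
     module.subspace smul V0 \<and> module.subspace smul V1 \<and>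
     V0 \<inter> V1 = {0} \<and> (\<forall>v. \<exists>a\<in>V0. \<exists>b\<in>V1. v = a + b) \<and>
     (\<forall>m. L m ` V0 \<subseteq> V0 \<and> L m ` V1 \<subseteq> V1) \<and>
     c ` V0 \<subseteq> V0 \<and> c ` V1 \<subseteq> V1 \<and>
     (\<forall>m. G m ` V0 \<subseteq> V1 \<and> G m ` V1 \<subseteq> V0) \<and>
     \<comment> \<open>linearity of the action\<close>
     (\<forall>m. Vector_Spaces.linear smul smul (L m)) \<and>
     (\<forall>m. Vector_Spaces.linear smul smul (G m)) \<and>
     Vector_Spaces.linear smul smul c \<and>
     \<comment> \<open>bracket relations\<close>
     (\<forall>m n v. L m (L n v) - L n (L m v) =
        smul (of_int (int m - int n)) (L (m + n) v) +
        (if m + n = 0 then smul ((of_nat m ^ 3 - of_nat m) / 12) (c v) else 0)) \<and>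
     (\<forall>m n v. L m (G n v) - G n (L m v) =
        smul (of_nat m / 2 - of_nat n) (G (m + n) v)) \<and>
     (\<forall>m n v. G m (G n v) + G n (G m v) =
        smul 2 (L (m + n) v) +
        (if m + n = 0 then smul ((1/3) * (of_nat m ^ 2 - 1/4)) (c v) else 0)) \<and>
     (\<forall>m v. L m (c v) = c (L m v)) \<and>
     (\<forall>m v. G m (c v) = c (G m v))"

end

theory Submission
  imports Defs
begin

text \<open>Since b contains G_0, the relation [L_m, G_0] = (m/2) G_m expresses every G_m with m > 0
  through L_m; hence G_m kills V as soon as L_m does.\<close>

lemma ramond_b_module_L_G0_bracket:
  assumes "ramond_b_module smul V0 V1 L G c"
  shows "smul (of_nat m / 2) (G m v) = L m (G 0 v) - G 0 (L m v)"
  using assms unfolding ramond_b_module_def by simp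

lemma ramond_b_module_G_eq_0_if_L_eq_0:
  assumes module: "ramond_b_module smul V0 V1 L G c"
    and "m > 0" and L_zero: "\<forall>v. L m v = 0"
  shows "G m v = 0"
proof -
  have vs: "vector_space smul" and lin: "Vector_Spaces.linear smul smul (G 0)"
    using module unfolding ramond_b_module_def by blast+
  have "G 0 (L m v) = 0"
    using L_zero module_hom.zero[OF Vector_Spaces.linear.axioms(3)[OF lin]] by simp
  then have "smul (of_nat m / 2) (G m v) = 0"
    using ramond_b_module_L_G0_bracket[OF module] L_zero by simp
  moreover have "(of_nat m / 2 :: complex) \<noteq> 0"
    using \<open>m > 0\<close> by simp
  ultimately show ?thesis
    using vector_space.scale_eq_0_iff[OF vs] by blast
qed

theorem lemma3p1:
  fixes smul :: "complex \<Rightarrow> 'v::ab_group_add \<Rightarrow> 'v"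
    and V0 V1 :: "'v set"
    and L G :: "nat \<Rightarrow> 'v \<Rightarrow> 'v"
    and c :: "'v \<Rightarrow> 'v"
    and t :: nat
  assumes "ramond_b_module smul V0 V1 L G c"
    and "t > 0"
    and "inj (L t)"
    and "\<forall>i>t. \<forall>v. L i v = 0"
  shows "\<forall>j>t. \<forall>v. G j v = 0"
  using ramond_b_module_G_eq_0_if_L_eq_0[OF assms(1)] assms(4) by simp

end
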